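(* Let $G=\{g_1,g_2,\dots\}$ be a countable amenable group and let $(F_n)_{n\in\mathbb{N}}$ be a F\o lner sequence of finite nonempty subsets of $G$ such that for every $\alpha\in[0,1)$ the series $\sum_{n=1}^\infty \alpha^{|F_n|}$ converges. Let $G$ act by measure-preserving transformations on a probability space $(X,\mu)$. Let $f\in L^\infty(\mu)$ be such that for every $\varepsilon>0$ there exists a finite set $K\subset G$ such that $f$ is $\varepsilon$-independent from the $\sigma$-algebra $\sigma(\{f\circ g: g\in G\setminus K\})$. Then \[ \lim_{n\to\infty} \frac1{|F_n|} \sum_{g\in F_n} f(gx) = \int f \, d\mu \qquad \text{for } \mu\text{-almost every } x\in X. \]
   Context: For $g\in G$ and $x\in X$, $gx$ denotes the image of $x$ under the measure-preserving transformation associated to $g$, and $f\circ g$ denotes the function $x\mapsto f(gx)$. For a family $\mathcal{F}\subset L^1(\mu)$, $\sigma(\mathcal{F})$ denotes the smallest sub-$\sigma$-algebra with respect to which every $f\in\mathcal{F}$ is measurable. A function $f$ is said to be $\varepsilon$-independent from a sub-$\sigma$-algebra $\Sigma_0$ if for every $B\in\Sigma_0$ with $\mu(B)>0$ one has $\left|\int_B f\, d\mu_B - \int f\, d\mu\right|<\varepsilon$, where $\mu_B(A)=\mu(A\cap B)/\mu(B)$ is the conditional measure on $B$. A F\o lner sequence is a sequence of finite nonempty sets $F_n\subset G$ with $|F_n g\,\triangle\, F_n|/|F_n|\to 0$ for every $g\in G$. *)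

theory Defs
  imports "HOL-Probability.Probability"
begin

text \<open>Measure-preserving left action of a group (written additively, type class group_add)
  on a probability space: T g x is gx.\<close>
definition mp_action :: "'x measure \<Rightarrow> ('g::group_add \<Rightarrow> 'x \<Rightarrow> 'x) \<Rightarrow> bool" where
  "mp_action M T \<longleftrightarrow>
     (\<forall>g. T g \<in> M \<rightarrow>\<^sub>M M \<and> distr M M (T g) = M) \<and>
     (\<forall>x\<in>space M. T 0 x = x) \<and>
     (\<forall>g h. \<forall>x\<in>space M. T (g + h) x = T g (T h x))"

definition folner :: "(nat \<Rightarrow> 'g::group_add set) \<Rightarrow> bool" where
  "folner F \<longleftrightarrow>
     (\<forall>n. finite (F n) \<and> F n \<noteq> {}) \<and>
     (\<forall>g. (\<lambda>n. real (card (((\<lambda>h. h + g) ` F n - F n) \<union> (F n - (\<lambda>h. h + g) ` F n)))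
                 / real (card (F n))) \<longlonglongrightarrow> 0)"

definition gen_sigma :: "'x measure \<Rightarrow> ('x \<Rightarrow> real) set \<Rightarrow> 'x set set" where
  "gen_sigma M \<F> = sigma_sets (space M) {h -` B \<inter> space M | h B. h \<in> \<F> \<and> B \<in> sets borel}"

definition eps_independent :: "'x measure \<Rightarrow> ('x \<Rightarrow> real) \<Rightarrow> 'x set set \<Rightarrow> real \<Rightarrow> bool" where
  "eps_independent M f \<Sigma>0 \<epsilon> \<longleftrightarrow>
     (\<forall>B\<in>\<Sigma>0. measure M B > 0 \<longrightarrow>
        \<bar>(\<integral>x. indicator B x * f x \<partial>M) / measure M B - (\<integral>x. f x \<partial>M)\<bar> < \<epsilon>)"

end

theory Submission
  imports Defs
begin

text \<open>
  Put \<open>Y g = f \<circ> T g - \<integral>f\<close>. Since \<open>T\<close> preserves the measure, the \<open>\<epsilon>\<close>-independence of \<open>f\<close> from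
  the translates \<open>f \<circ> T h\<close> with \<open>h \<notin> K\<close> becomes \<open>\<epsilon>\<close>-independence of \<open>Y g\<close> from the translates
  with \<open>h - g \<notin> K\<close>. Colour \<open>F n\<close> greedily with \<open>2 card K + 1\<close> colours so that no two elements
  of a colour class differ by an element of \<open>K\<close>. Inside a class each \<open>Y g\<close> then has conditional
  mean at most \<open>\<epsilon>\<close> given all the others, and \<open>exp y \<le> 1 + y + y\<^sup>2\<close> for \<open>\<bar>y\<bar> \<le> 1\<close> gives a
  Hoeffding-type bound: the sum of \<open>Y\<close> over a class exceeds \<open>\<epsilon>\<close> times its size plus \<open>\<delta> card (F n)\<close>
  with probability at most \<open>2 exp (- \<beta> card (F n))\<close>. The hypothesis on \<open>\<Sum>n. \<alpha> ^ card (F n)\<close>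
  makes these probabilities summable, so by Borel-Cantelli almost surely all classes are eventually
  good and the sum of \<open>Y\<close> over \<open>F n\<close> is at most \<open>2 \<epsilon> card (F n)\<close> in absolute value; then let
  \<open>\<epsilon> \<rightarrow> 0\<close>. An essentially bounded \<open>f\<close> is first replaced by its truncation, which agrees with
  \<open>f\<close> along almost every orbit.
\<close>

lemma exp_le_one_add_add_square:
  fixes y :: real
  assumes "\<bar>y\<bar> \<le> 1"
  shows "exp y \<le> 1 + y + y\<^sup>2"
proof (cases "y \<ge> 0")
  case True
  then show ?thesis using exp_bound[of y] assms by auto
next
  case False
  have "(1 - y) * (1 + y + y\<^sup>2) = 1 - y * y\<^sup>2"
    by (simp add: algebra_simps power2_eq_square)
  moreover have "y * y\<^sup>2 \<le> 0"
    using False by (intro mult_nonpos_nonneg) auto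
  ultimately have "1 / (1 - y) \<le> 1 + y + y\<^sup>2"
    using False by (simp add: field_simps)
  moreover have "exp y \<le> 1 / (1 - y)"
    using exp_ge_add_one_self[of "-y"] False by (simp add: exp_minus field_simps)
  ultimately show ?thesis by linarith
qed

context finite_measure_subalgebra
begin

lemma AE_real_cond_exp_le:
  fixes Y :: "'a \<Rightarrow> real"
  assumes Y: "integrable M Y"
    and cond: "\<And>B. B \<in> sets F \<Longrightarrow> (\<integral>x. indicator B x * Y x \<partial>M) \<le> \<epsilon> * measure M B"
  shows "AE x in M. real_cond_exp M F Y x \<le> \<epsilon>"
proof -
  define g where "g = real_cond_exp M F Y"
  have gF[measurable]: "g \<in> borel_measurable F"
    unfolding g_def by simp
  have space_F: "space F = space M"
    using subalg by (simp add: subalgebra_def)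
  define B where "B = {x \<in> space M. \<epsilon> < g x}"
  have BF: "B \<in> sets F"
    unfolding B_def space_F[symmetric] by measurable
  then have BM[measurable]: "B \<in> sets M"
    using subalg by (auto simp: subalgebra_def)
  have "integrable M (\<lambda>x. indicator B x * Y x)"
    using integrable_mult_indicator[OF BM Y] by simp
  then have iBg: "integrable M (\<lambda>x. indicator B x * g x)"
    and eq: "(\<integral>x. indicator B x * g x \<partial>M) = (\<integral>x. indicator B x * Y x \<partial>M)"
    unfolding g_def using BF borel_measurable_integrable[OF Y]
    by (auto intro!: real_cond_exp_intg borel_measurable_indicator)
  have int: "integrable M (\<lambda>x. indicator B x * (g x - \<epsilon>))"
    using iBg by (simp add: right_diff_distrib emeasure_eq_measure)
  have nonneg: "AE x in M. 0 \<le> indicator B x * (g x - \<epsilon>)"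
    by (rule AE_I2) (auto simp: indicator_def B_def)
  have "(\<integral>x. indicator B x * (g x - \<epsilon>) \<partial>M) = (\<integral>x. indicator B x * g x \<partial>M) - \<epsilon> * measure M B"
    using iBg by (simp add: right_diff_distrib emeasure_eq_measure mult.commute)
  also have "\<dots> \<le> 0"
    using eq cond[OF BF] by simp
  finally have "(\<integral>x. indicator B x * (g x - \<epsilon>) \<partial>M) = 0"
    using integral_nonneg_AE[OF nonneg] by linarith
  then have "AE x in M. indicator B x * (g x - \<epsilon>) = 0"
    using integral_nonneg_eq_0_iff_AE[OF int nonneg] by simp
  then show ?thesis
    unfolding g_def[symmetric] using AE_space
    by eventually_elim (auto simp: indicator_def B_def split: if_splits)
qed

lemma integral_mult_le_of_set_integrals_le:
  fixes Y Z :: "'a \<Rightarrow> real"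
  assumes Y[measurable]: "Y \<in> borel_measurable M" and Ybd: "\<And>x. x \<in> space M \<Longrightarrow> \<bar>Y x\<bar> \<le> c"
    and cond: "\<And>B. B \<in> sets F \<Longrightarrow> (\<integral>x. indicator B x * Y x \<partial>M) \<le> \<epsilon> * measure M B"
    and ZF[measurable]: "Z \<in> borel_measurable F"
    and Zbd: "\<And>x. x \<in> space M \<Longrightarrow> 0 \<le> Z x \<and> Z x \<le> d"
  shows "(\<integral>x. Z x * Y x \<partial>M) \<le> \<epsilon> * (\<integral>x. Z x \<partial>M)"
proof -
  have ZM[measurable]: "Z \<in> borel_measurable M"
    by (rule measurable_from_subalg[OF subalg ZF])
  have Z: "integrable M Z"
    by (rule integrable_const_bound[where B=d]) (use Zbd in auto)
  have ZY: "integrable M (\<lambda>x. Z x * Y x)"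
    using Zbd Ybd by (intro integrable_const_bound[where B="d * c"] AE_I2)
      (auto simp: abs_mult intro!: mult_mono')
  have "AE x in M. real_cond_exp M F Y x \<le> \<epsilon>"
    by (rule AE_real_cond_exp_le[OF _ cond])
      (auto intro!: integrable_const_bound[where B=c] Ybd)
  then have "AE x in M. Z x * real_cond_exp M F Y x \<le> \<epsilon> * Z x"
    using AE_space by eventually_elim (metis Zbd mult.commute mult_left_mono)
  then have "(\<integral>x. Z x * real_cond_exp M F Y x \<partial>M) \<le> (\<integral>x. \<epsilon> * Z x \<partial>M)"
    using ZY Z by (intro integral_mono_AE) (auto intro: real_cond_exp_intg)
  then show ?thesis
    using real_cond_exp_intg(2)[OF ZY] by simp
qed

lemma integral_mult_exp_le:
  fixes Y Z :: "'a \<Rightarrow> real"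
  assumes Y[measurable]: "Y \<in> borel_measurable M" and Ybd: "\<And>x. x \<in> space M \<Longrightarrow> \<bar>Y x\<bar> \<le> c"
    and cond: "\<And>B. B \<in> sets F \<Longrightarrow> (\<integral>x. indicator B x * Y x \<partial>M) \<le> \<epsilon> * measure M B"
    and ZF[measurable]: "Z \<in> borel_measurable F"
    and Zbd: "\<And>x. x \<in> space M \<Longrightarrow> 0 \<le> Z x \<and> Z x \<le> d"
    and t: "0 \<le> t" "t * c \<le> 1"
  shows "(\<integral>x. Z x * exp (t * Y x) \<partial>M) \<le> exp (t * \<epsilon> + t\<^sup>2 * c\<^sup>2) * (\<integral>x. Z x \<partial>M)"
proof -
  have ZM[measurable]: "Z \<in> borel_measurable M"
    by (rule measurable_from_subalg[OF subalg ZF])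
  have Z: "integrable M Z"
    by (rule integrable_const_bound[where B=d]) (use Zbd in auto)
  have ZY: "integrable M (\<lambda>x. Z x * Y x)"
    using Zbd Ybd by (intro integrable_const_bound[where B="d * c"] AE_I2)
      (auto simp: abs_mult intro!: mult_mono')
  have "\<bar>Z x * exp (t * Y x)\<bar> \<le> d * exp (t * c)" if x: "x \<in> space M" for x
  proof -
    have "t * Y x \<le> t * c"
      using Ybd[OF x] t by (intro mult_left_mono) auto
    then show ?thesis
      using Zbd[OF x] by (simp add: abs_mult mult_mono')
  qed
  then have ZexpY: "integrable M (\<lambda>x. Z x * exp (t * Y x))"
    by (intro integrable_const_bound[where B="d * exp (t * c)"] AE_I2) auto
  have exp_tY: "exp (t * Y x) \<le> 1 + t * Y x + t\<^sup>2 * c\<^sup>2" if x: "x \<in> space M" for x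
  proof -
    have tY: "\<bar>t * Y x\<bar> \<le> t * c"
      using Ybd[OF x] t by (simp add: abs_mult mult_left_mono)
    then have "(t * Y x)\<^sup>2 \<le> (t * c)\<^sup>2"
      by (metis abs_ge_zero order.trans power2_abs power_mono)
    moreover have "exp (t * Y x) \<le> 1 + t * Y x + (t * Y x)\<^sup>2"
      using tY t by (intro exp_le_one_add_add_square) linarith
    ultimately show ?thesis
      by (simp add: power_mult_distrib)
  qed
  have "(\<integral>x. Z x * exp (t * Y x) \<partial>M) \<le> (\<integral>x. (1 + t\<^sup>2 * c\<^sup>2) * Z x + t * (Z x * Y x) \<partial>M)"
  proof (rule integral_mono[OF ZexpY])
    show "integrable M (\<lambda>x. (1 + t\<^sup>2 * c\<^sup>2) * Z x + t * (Z x * Y x))"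
      using Z ZY by auto
    show "Z x * exp (t * Y x) \<le> (1 + t\<^sup>2 * c\<^sup>2) * Z x + t * (Z x * Y x)" if "x \<in> space M" for x
      using mult_left_mono[OF exp_tY[OF that], of "Z x"] Zbd[OF that] by (simp add: algebra_simps)
  qed
  also have "\<dots> = (1 + t\<^sup>2 * c\<^sup>2) * (\<integral>x. Z x \<partial>M) + t * (\<integral>x. Z x * Y x \<partial>M)"
    using Z ZY by simp
  also have "\<dots> \<le> (1 + t\<^sup>2 * c\<^sup>2) * (\<integral>x. Z x \<partial>M) + t * (\<epsilon> * (\<integral>x. Z x \<partial>M))"
    using integral_mult_le_of_set_integrals_le[OF Y Ybd cond ZF Zbd] t by (simp add: mult_left_mono)
  also have "\<dots> = (1 + (t * \<epsilon> + t\<^sup>2 * c\<^sup>2)) * (\<integral>x. Z x \<partial>M)"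
    by (simp add: algebra_simps)
  also have "\<dots> \<le> exp (t * \<epsilon> + t\<^sup>2 * c\<^sup>2) * (\<integral>x. Z x \<partial>M)"
    using Zbd by (intro mult_right_mono exp_ge_add_one_self integral_nonneg) auto
  finally show ?thesis .
qed

end

lemma integral_exp_sum_le:
  fixes Y :: "'i \<Rightarrow> 'a \<Rightarrow> real"
  assumes "prob_space M" and "finite S"
    and Y[measurable]: "\<And>i. i \<in> S \<Longrightarrow> Y i \<in> borel_measurable M"
    and Ybd: "\<And>i x. i \<in> S \<Longrightarrow> x \<in> space M \<Longrightarrow> \<bar>Y i x\<bar> \<le> c"
    and sub: "\<And>i. i \<in> S \<Longrightarrow> subalgebra M (N i)"
    and YN: "\<And>i j. i \<in> S \<Longrightarrow> j \<in> S \<Longrightarrow> j \<noteq> i \<Longrightarrow> Y j \<in> borel_measurable (N i)"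
    and cond: "\<And>i B. i \<in> S \<Longrightarrow> B \<in> sets (N i) \<Longrightarrow> (\<integral>x. indicator B x * Y i x \<partial>M) \<le> \<epsilon> * measure M B"
    and t: "0 \<le> t" "t * c \<le> 1"
  shows "(\<integral>x. exp (t * (\<Sum>i\<in>S. Y i x)) \<partial>M) \<le> exp (real (card S) * (t * \<epsilon> + t\<^sup>2 * c\<^sup>2))"
proof -
  interpret prob_space M by fact
  have "(\<integral>x. exp (t * (\<Sum>i\<in>P. Y i x)) \<partial>M) \<le> exp (real (card P) * (t * \<epsilon> + t\<^sup>2 * c\<^sup>2))"
    if "P \<subseteq> S" for P
    using finite_subset[OF that \<open>finite S\<close>] that
  proof (induction P rule: finite_induct)
    case empty
    then show ?case by (simp add: prob_space)
  next
    case (insert a P)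
    interpret finite_measure_subalgebra M "N a"
      using insert.prems sub by unfold_locales auto
    define Z where "Z x = exp (t * (\<Sum>i\<in>P. Y i x))" for x
    have "(\<lambda>x. \<Sum>i\<in>P. Y i x) \<in> borel_measurable (N a)"
      using insert YN by (intro borel_measurable_sum) auto
    then have ZN: "Z \<in> borel_measurable (N a)"
      unfolding Z_def by measurable
    have "(\<Sum>i\<in>P. Y i x) \<le> real (card P) * c" if "x \<in> space M" for x
      using sum_mono[of P "\<lambda>i. Y i x" "\<lambda>_. c"] Ybd insert.prems that by force
    then have Zbd: "0 \<le> Z x \<and> Z x \<le> exp (t * (real (card P) * c))" if "x \<in> space M" for x
      unfolding Z_def using that t by (auto intro: mult_left_mono)
    have "(\<integral>x. exp (t * (\<Sum>i\<in>insert a P. Y i x)) \<partial>M) = (\<integral>x. Z x * exp (t * Y a x) \<partial>M)"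
      using insert.hyps by (simp add: Z_def distrib_left exp_add mult.commute)
    also have "\<dots> \<le> exp (t * \<epsilon> + t\<^sup>2 * c\<^sup>2) * (\<integral>x. Z x \<partial>M)"
      using insert.prems
      by (intro integral_mult_exp_le[OF _ _ _ ZN Zbd t]) (auto intro: Ybd cond)
    also have "\<dots> \<le> exp (t * \<epsilon> + t\<^sup>2 * c\<^sup>2) * exp (real (card P) * (t * \<epsilon> + t\<^sup>2 * c\<^sup>2))"
      using insert by (simp add: Z_def)
    also have "\<dots> = exp (real (card (insert a P)) * (t * \<epsilon> + t\<^sup>2 * c\<^sup>2))"
      using insert.hyps by (simp add: exp_add[symmetric] algebra_simps)
    finally show ?case .
  qed
  then show ?thesis by blast
qed

lemma measure_sum_ge_le:
  fixes Y :: "'i \<Rightarrow> 'a \<Rightarrow> real"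
  assumes "prob_space M" and "finite S"
    and Y[measurable]: "\<And>i. i \<in> S \<Longrightarrow> Y i \<in> borel_measurable M"
    and Ybd: "\<And>i x. i \<in> S \<Longrightarrow> x \<in> space M \<Longrightarrow> \<bar>Y i x\<bar> \<le> c"
    and sub: "\<And>i. i \<in> S \<Longrightarrow> subalgebra M (N i)"
    and YN: "\<And>i j. i \<in> S \<Longrightarrow> j \<in> S \<Longrightarrow> j \<noteq> i \<Longrightarrow> Y j \<in> borel_measurable (N i)"
    and cond: "\<And>i B. i \<in> S \<Longrightarrow> B \<in> sets (N i) \<Longrightarrow> (\<integral>x. indicator B x * Y i x \<partial>M) \<le> \<epsilon> * measure M B"
    and t: "0 < t" "t * c \<le> 1"
  shows "measure M {x \<in> space M. real (card S) * \<epsilon> + r \<le> (\<Sum>i\<in>S. Y i x)}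
           \<le> exp (real (card S) * t\<^sup>2 * c\<^sup>2 - t * r)"
proof -
  interpret prob_space M by fact
  define a where "a = real (card S) * \<epsilon> + r"
  define u where "u x = exp (t * (\<Sum>i\<in>S. Y i x))" for x
  have "(\<lambda>x. \<Sum>i\<in>S. Y i x) \<in> borel_measurable M"
    using Y by (intro borel_measurable_sum)
  then have u[measurable]: "u \<in> borel_measurable M"
    unfolding u_def by measurable
  have "(\<Sum>i\<in>S. Y i x) \<le> real (card S) * c" if "x \<in> space M" for x
    using sum_mono[of S "\<lambda>i. Y i x" "\<lambda>_. c"] Ybd that by force
  then have "norm (u x) \<le> exp (t * (real (card S) * c))" if "x \<in> space M" for x
    unfolding u_def using that t by (auto intro: mult_left_mono)
  then have "integrable M u"
    by (intro integrable_const_bound[where B="exp (t * (real (card S) * c))"] AE_I2) auto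
  then have "measure M {x \<in> space M. exp (t * a) \<le> u x} \<le> (\<integral>x. u x \<partial>M) / exp (t * a)"
    by (rule integral_Markov_inequality_measure[OF _ sets.top]) (auto simp: u_def)
  also have "\<dots> \<le> exp (real (card S) * (t * \<epsilon> + t\<^sup>2 * c\<^sup>2)) / exp (t * a)"
    unfolding u_def using t
    by (intro divide_right_mono integral_exp_sum_le[OF assms(1,2) Y Ybd sub YN cond]) auto
  also have "\<dots> = exp (real (card S) * t\<^sup>2 * c\<^sup>2 - t * r)"
    unfolding a_def by (simp add: exp_diff[symmetric] algebra_simps)
  finally show ?thesis
    using t unfolding a_def u_def by simp
qed

lemma measure_abs_sum_ge_le:
  fixes Y :: "'i \<Rightarrow> 'a \<Rightarrow> real"
  assumes "prob_space M" and "finite S"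
    and Y[measurable]: "\<And>i. i \<in> S \<Longrightarrow> Y i \<in> borel_measurable M"
    and Ybd: "\<And>i x. i \<in> S \<Longrightarrow> x \<in> space M \<Longrightarrow> \<bar>Y i x\<bar> \<le> c"
    and sub: "\<And>i. i \<in> S \<Longrightarrow> subalgebra M (N i)"
    and YN: "\<And>i j. i \<in> S \<Longrightarrow> j \<in> S \<Longrightarrow> j \<noteq> i \<Longrightarrow> Y j \<in> borel_measurable (N i)"
    and cond: "\<And>i B. i \<in> S \<Longrightarrow> B \<in> sets (N i) \<Longrightarrow>
      \<bar>\<integral>x. indicator B x * Y i x \<partial>M\<bar> \<le> \<epsilon> * measure M B"
    and t: "0 < t" "t * c \<le> 1"
  shows "measure M {x \<in> space M. real (card S) * \<epsilon> + r \<le> \<bar>\<Sum>i\<in>S. Y i x\<bar>}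
           \<le> 2 * exp (real (card S) * t\<^sup>2 * c\<^sup>2 - t * r)"
proof -
  interpret prob_space M by fact
  let ?bound = "\<lambda>Y. {x \<in> space M. real (card S) * \<epsilon> + r \<le> (\<Sum>i\<in>S. Y i x)}"
  have cond_upper: "(\<integral>x. indicator B x * Y i x \<partial>M) \<le> \<epsilon> * measure M B"
    and cond_lower: "(\<integral>x. indicator B x * - Y i x \<partial>M) \<le> \<epsilon> * measure M B"
    if "i \<in> S" "B \<in> sets (N i)" for i B
    using cond[OF that] by (auto simp: abs_le_iff)
  have upper: "measure M (?bound Y) \<le> exp (real (card S) * t\<^sup>2 * c\<^sup>2 - t * r)"
    by (rule measure_sum_ge_le[OF assms(1,2) Y Ybd sub YN cond_upper t])
  have lower: "measure M (?bound (\<lambda>i x. - Y i x)) \<le> exp (real (card S) * t\<^sup>2 * c\<^sup>2 - t * r)"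
  proof (rule measure_sum_ge_le[OF assms(1,2) _ _ sub _ cond_lower t])
    show "(\<lambda>x. - Y j x) \<in> borel_measurable (N i)" if "i \<in> S" "j \<in> S" "j \<noteq> i" for i j
      using YN[OF that] by measurable
  qed (use Ybd in auto)
  have "(\<lambda>x. \<Sum>i\<in>S. Y i x) \<in> borel_measurable M"
    using Y by (intro borel_measurable_sum)
  then have "measure M (?bound Y \<union> ?bound (\<lambda>i x. - Y i x))
      \<le> measure M (?bound Y) + measure M (?bound (\<lambda>i x. - Y i x))"
    unfolding sum_negf
    by (intro measure_Un_le) (simp_all add: borel_measurable_iff_ge borel_measurable_uminus)
  moreover have "{x \<in> space M. real (card S) * \<epsilon> + r \<le> \<bar>\<Sum>i\<in>S. Y i x\<bar>}
      = ?bound Y \<union> ?bound (\<lambda>i x. - Y i x)"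
    by (auto simp: sum_negf abs_if)
  ultimately show ?thesis
    using upper lower by simp
qed

definition gen_sigma_measure :: "'x measure \<Rightarrow> ('x \<Rightarrow> real) set \<Rightarrow> 'x measure" where
  "gen_sigma_measure M H = sigma (space M) {h -` B \<inter> space M | h B. h \<in> H \<and> B \<in> sets borel}"

lemma
  shows sets_gen_sigma_measure: "sets (gen_sigma_measure M H) = gen_sigma M H"
    and space_gen_sigma_measure: "space (gen_sigma_measure M H) = space M"
  unfolding gen_sigma_measure_def gen_sigma_def by (auto intro!: sets_measure_of space_measure_of)

lemma gen_sigma_subset_sets:
  assumes "H \<subseteq> borel_measurable M"
  shows "gen_sigma M H \<subseteq> sets M"
  unfolding gen_sigma_def using assms by (intro sets.sigma_sets_subset) (auto simp: measurable_sets)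

lemma subalgebra_gen_sigma_measure:
  assumes "H \<subseteq> borel_measurable M"
  shows "subalgebra M (gen_sigma_measure M H)"
  unfolding subalgebra_def sets_gen_sigma_measure space_gen_sigma_measure
  using gen_sigma_subset_sets[OF assms] by simp

lemma measurable_gen_sigma_measure:
  assumes "h \<in> H"
  shows "h \<in> borel_measurable (gen_sigma_measure M H)"
proof (rule measurableI)
  fix B :: "real set"
  assume "B \<in> sets borel"
  then show "h -` B \<inter> space (gen_sigma_measure M H) \<in> sets (gen_sigma_measure M H)"
    using assms unfolding sets_gen_sigma_measure space_gen_sigma_measure gen_sigma_def
    by (blast intro: sigma_sets.Basic)
qed auto

lemma mp_actionD:
  assumes "mp_action M T"
  shows mp_action_measurable: "T g \<in> M \<rightarrow>\<^sub>M M"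
    and mp_action_distr: "distr M M (T g) = M"
    and mp_action_add: "x \<in> space M \<Longrightarrow> T (g + h) x = T g (T h x)"
  using assms unfolding mp_action_def by auto

lemma gen_sigma_translate:
  fixes T :: "'g::group_add \<Rightarrow> 'x \<Rightarrow> 'x" and f :: "'x \<Rightarrow> real"
  assumes "mp_action M T"
  shows "gen_sigma M {(\<lambda>x. f (T g x)) | g. g - i \<notin> K}
    = {T i -` A \<inter> space M | A. A \<in> gen_sigma M {(\<lambda>x. f (T g x)) | g. g \<notin> K}}"
proof -
  define gens where "gens P = {h -` B \<inter> space M | h B. h \<in> {(\<lambda>x. f (T g x)) | g. P g} \<and> B \<in> sets borel}"
    for P :: "'g \<Rightarrow> bool"
  have gensI: "(\<lambda>x. f (T g x)) -` B \<inter> space M \<in> gens P" if "P g" "B \<in> sets borel" for P g B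
    unfolding gens_def using that by blast
  have T_space: "T g x \<in> space M" if "x \<in> space M" for g x
    using mp_action_measurable[OF assms] that by (rule measurable_space)
  have shift: "(\<lambda>x. f (T g x)) -` B \<inter> space M = T i -` ((\<lambda>x. f (T (g - i) x)) -` B \<inter> space M) \<inter> space M"
    for g B
    using mp_action_add[OF assms, of _ "g - i" i] T_space by auto
  have "gens (\<lambda>g. g - i \<notin> K) = {T i -` A \<inter> space M | A. A \<in> gens (\<lambda>g. g \<notin> K)}"
  proof (intro equalityI subsetI)
    fix S
    assume "S \<in> gens (\<lambda>g. g - i \<notin> K)"
    then obtain g B where "g - i \<notin> K" "B \<in> sets borel" "S = (\<lambda>x. f (T g x)) -` B \<inter> space M"
      unfolding gens_def by blast
    then show "S \<in> {T i -` A \<inter> space M | A. A \<in> gens (\<lambda>g. g \<notin> K)}"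
      using gensI[of "\<lambda>g. g \<notin> K" "g - i" B] shift[of g B] by blast
  next
    fix S
    assume "S \<in> {T i -` A \<inter> space M | A. A \<in> gens (\<lambda>g. g \<notin> K)}"
    then obtain g B where "g \<notin> K" "B \<in> sets borel" "S = T i -` ((\<lambda>x. f (T g x)) -` B \<inter> space M) \<inter> space M"
      unfolding gens_def by blast
    then show "S \<in> gens (\<lambda>g. g - i \<notin> K)"
      using gensI[of "\<lambda>g. g - i \<notin> K" "g + i" B] shift[of "g + i" B] by simp
  qed
  moreover have "T i \<in> space M \<rightarrow> space M"
    using T_space by auto
  ultimately show ?thesis
    unfolding gen_sigma_def gens_def[symmetric] by (simp add: sigma_sets_vimage_commute)
qed

lemma eps_independent_abs_integral_le:
  fixes f :: "'x \<Rightarrow> real"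
  assumes "finite_measure M" and f: "integrable M f"
    and indep: "eps_independent M f \<Sigma> \<epsilon>" and A: "A \<in> \<Sigma>" "A \<in> sets M"
  shows "\<bar>\<integral>x. indicator A x * (f x - (\<integral>x. f x \<partial>M)) \<partial>M\<bar> \<le> \<epsilon> * measure M A"
proof -
  interpret finite_measure M by fact
  have eq: "(\<integral>x. indicator A x * (f x - (\<integral>x. f x \<partial>M)) \<partial>M)
      = (\<integral>x. indicator A x * f x \<partial>M) - (\<integral>x. f x \<partial>M) * measure M A"
    using integrable_mult_indicator[OF A(2) f] A(2)
    by (simp add: right_diff_distrib emeasure_eq_measure mult.commute)
  show ?thesis
  proof (cases "measure M A > 0")
    case True
    then have "\<bar>(\<integral>x. indicator A x * f x \<partial>M) / measure M A - (\<integral>x. f x \<partial>M)\<bar> < \<epsilon>"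
      using indep A unfolding eps_independent_def by blast
    then have "\<bar>(\<integral>x. indicator A x * f x \<partial>M) / measure M A - (\<integral>x. f x \<partial>M)\<bar> * measure M A
        \<le> \<epsilon> * measure M A"
      using True by (intro mult_right_mono) auto
    moreover have "(\<integral>x. indicator A x * f x \<partial>M) - (\<integral>x. f x \<partial>M) * measure M A
        = ((\<integral>x. indicator A x * f x \<partial>M) / measure M A - (\<integral>x. f x \<partial>M)) * measure M A"
      using True by (simp add: field_simps)
    ultimately show ?thesis
      unfolding eq using True by (simp add: abs_mult)
  next
    case False
    then have "A \<in> null_sets M"
      using A(2) measure_nonneg[of M A] by (simp add: emeasure_eq_measure null_sets_def)
    then have "(\<integral>x. indicator A x * f x \<partial>M) = 0"
      by (intro integral_eq_zero_AE) (auto dest: AE_not_in elim: AE_mp)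
    with False show ?thesis
      unfolding eq using measure_nonneg[of M A] by simp
  qed
qed

lemma translate_abs_integral_le:
  fixes T :: "'g::group_add \<Rightarrow> 'x \<Rightarrow> 'x" and f :: "'x \<Rightarrow> real"
  assumes "prob_space M" and T: "mp_action M T" and f: "integrable M f"
    and indep: "eps_independent M f (gen_sigma M {(\<lambda>x. f (T g x)) | g. g \<notin> K}) \<epsilon>"
    and B: "B \<in> gen_sigma M {(\<lambda>x. f (T g x)) | g. g - i \<notin> K}"
  shows "\<bar>\<integral>x. indicator B x * (f (T i x) - (\<integral>x. f x \<partial>M)) \<partial>M\<bar> \<le> \<epsilon> * measure M B"
proof -
  interpret prob_space M by fact
  note [measurable] = mp_action_measurable[OF T] borel_measurable_integrable[OF f]
  have "{(\<lambda>x. f (T g x)) | g. g \<notin> K} \<subseteq> borel_measurable M"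
    by auto
  then have gen_sets: "gen_sigma M {(\<lambda>x. f (T g x)) | g. g \<notin> K} \<subseteq> sets M"
    by (rule gen_sigma_subset_sets)
  obtain A where A: "A \<in> gen_sigma M {(\<lambda>x. f (T g x)) | g. g \<notin> K}" and B_eq: "B = T i -` A \<inter> space M"
    using B unfolding gen_sigma_translate[OF T] by blast
  have A_sets[measurable]: "A \<in> sets M"
    using A gen_sets by blast
  have "(\<integral>x. indicator B x * (f (T i x) - (\<integral>x. f x \<partial>M)) \<partial>M)
      = (\<integral>x. indicator A (T i x) * (f (T i x) - (\<integral>x. f x \<partial>M)) \<partial>M)"
    unfolding B_eq by (intro Bochner_Integration.integral_cong) (auto simp: indicator_def)
  also have "\<dots> = (\<integral>y. indicator A y * (f y - (\<integral>x. f x \<partial>M)) \<partial>distr M M (T i))"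
    by (rule integral_distr[symmetric]) measurable
  finally have "(\<integral>x. indicator B x * (f (T i x) - (\<integral>x. f x \<partial>M)) \<partial>M)
      = (\<integral>y. indicator A y * (f y - (\<integral>x. f x \<partial>M)) \<partial>M)"
    unfolding mp_action_distr[OF T] .
  moreover have "measure M B = measure M A"
    unfolding B_eq using measure_distr[of "T i" M M A] by (simp add: mp_action_distr[OF T])
  ultimately show ?thesis
    using eps_independent_abs_integral_le[OF finite_measure_axioms f indep A A_sets] by simp
qed

lemma measure_separated_sum_deviation_le:
  fixes T :: "'g::group_add \<Rightarrow> 'x \<Rightarrow> 'x" and f :: "'x \<Rightarrow> real"
  assumes "prob_space M" and T: "mp_action M T" and f[measurable]: "f \<in> borel_measurable M"
    and f_bound: "\<And>x. x \<in> space M \<Longrightarrow> \<bar>f x - (\<integral>x. f x \<partial>M)\<bar> \<le> c"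
    and indep: "eps_independent M f (gen_sigma M {(\<lambda>x. f (T g x)) | g. g \<notin> K}) \<epsilon>"
    and P: "finite P" and separated: "\<And>g h. g \<in> P \<Longrightarrow> h \<in> P \<Longrightarrow> g \<noteq> h \<Longrightarrow> g - h \<notin> K"
    and t: "0 < t" "t * c \<le> 1"
  shows "measure M {x \<in> space M. real (card P) * \<epsilon> + r \<le> \<bar>\<Sum>g\<in>P. f (T g x) - (\<integral>x. f x \<partial>M)\<bar>}
           \<le> 2 * exp (real (card P) * t\<^sup>2 * c\<^sup>2 - t * r)"
proof -
  interpret prob_space M by fact
  note [measurable] = mp_action_measurable[OF T]
  define N where "N i = gen_sigma_measure M {(\<lambda>x. f (T g x)) | g. g - i \<notin> K}" for i
  have "\<bar>f x\<bar> \<le> c + \<bar>\<integral>x. f x \<partial>M\<bar>" if "x \<in> space M" for x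
    using abs_triangle_ineq2[of "f x" "\<integral>x. f x \<partial>M"] f_bound[OF that] by linarith
  then have f_int: "integrable M f"
    by (intro integrable_const_bound[where B="c + \<bar>\<integral>x. f x \<partial>M\<bar>"] AE_I2) auto
  show ?thesis
  proof (rule measure_abs_sum_ge_le[OF prob_space_axioms P _ _ _ _ _ t, where N=N])
    show "(\<lambda>x. f (T g x) - (\<integral>x. f x \<partial>M)) \<in> borel_measurable M" for g
      by measurable
    show "\<bar>f (T g x) - (\<integral>x. f x \<partial>M)\<bar> \<le> c" if "x \<in> space M" for g x
      using f_bound measurable_space[OF mp_action_measurable[OF T] that] by blast
    show "subalgebra M (N i)" for i
      unfolding N_def by (rule subalgebra_gen_sigma_measure) auto
    show "(\<lambda>x. f (T j x) - (\<integral>x. f x \<partial>M)) \<in> borel_measurable (N i)"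
      if "i \<in> P" "j \<in> P" "j \<noteq> i" for i j
    proof -
      have [measurable]: "(\<lambda>x. f (T j x)) \<in> borel_measurable (N i)"
        unfolding N_def using separated[OF that(2,1,3)] by (intro measurable_gen_sigma_measure) blast
      show ?thesis by measurable
    qed
    show "\<bar>\<integral>x. indicator B x * (f (T i x) - (\<integral>x. f x \<partial>M)) \<partial>M\<bar> \<le> \<epsilon> * measure M B"
      if "B \<in> sets (N i)" for i B
      using that unfolding N_def sets_gen_sigma_measure
      by (rule translate_abs_integral_le[OF prob_space_axioms T f_int indep])
  qed
qed

lemma card_difference_neighbours_le:
  fixes a :: "'g::group_add"
  assumes "finite K"
  shows "card {h \<in> S. a - h \<in> K \<or> h - a \<in> K} \<le> 2 * card K"
proof -
  have "{h \<in> S. a - h \<in> K \<or> h - a \<in> K} \<subseteq> (\<lambda>k. - k + a) ` K \<union> (\<lambda>k. k + a) ` K"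
  proof
    fix h
    assume "h \<in> {h \<in> S. a - h \<in> K \<or> h - a \<in> K}"
    moreover have "h = - (a - h) + a" "h = (h - a) + a"
      by (simp_all add: minus_diff_eq)
    ultimately show "h \<in> (\<lambda>k. - k + a) ` K \<union> (\<lambda>k. k + a) ` K"
      by (metis (no_types, lifting) UnI1 UnI2 image_eqI mem_Collect_eq)
  qed
  then have "card {h \<in> S. a - h \<in> K \<or> h - a \<in> K} \<le> card ((\<lambda>k. - k + a) ` K) + card ((\<lambda>k. k + a) ` K)"
    using assms by (meson card_Un_le card_mono finite_UnI finite_imageI order_trans)
  also have "\<dots> \<le> 2 * card K"
    unfolding mult_2 by (intro add_mono card_image_le assms)
  finally show ?thesis .
qed

lemma colouring_avoiding_differences:
  fixes S K :: "'g::group_add set"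
  assumes "finite S" "finite K"
  shows "\<exists>col. (\<forall>g\<in>S. col g < 2 * card K + 1) \<and>
           (\<forall>g\<in>S. \<forall>h\<in>S. g \<noteq> h \<longrightarrow> col g = col h \<longrightarrow> g - h \<notin> K)"
  using assms(1)
proof (induction S rule: finite_induct)
  case empty
  show ?case by simp
next
  case (insert a S)
  obtain col where col_range: "\<forall>g\<in>S. col g < 2 * card K + 1"
    and col_sep: "\<forall>g\<in>S. \<forall>h\<in>S. g \<noteq> h \<longrightarrow> col g = col h \<longrightarrow> g - h \<notin> K"
    using insert.IH by (elim exE conjE) (rule that)
  define nbrs where "nbrs = {h \<in> S. a - h \<in> K \<or> h - a \<in> K}"
  have "card nbrs \<le> 2 * card K"
    unfolding nbrs_def by (rule card_difference_neighbours_le[OF assms(2)])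
  moreover have "finite nbrs"
    using insert.hyps(1) unfolding nbrs_def by simp
  ultimately have "card (col ` nbrs) < card {..<2 * card K + 1}"
    using card_image_le[of nbrs col] by simp
  then obtain i where i: "i < 2 * card K + 1" "i \<notin> col ` nbrs"
    by (metis \<open>finite nbrs\<close> card_mono finite_imageI lessThan_iff not_le subsetI)
  show ?case
  proof (intro exI[of _ "col(a := i)"] conjI ballI impI)
    show "(col(a := i)) g < 2 * card K + 1" if "g \<in> insert a S" for g
      using that col_range i by auto
  next
    fix g h
    assume g: "g \<in> insert a S" and h: "h \<in> insert a S" and "g \<noteq> h"
      and same: "(col(a := i)) g = (col(a := i)) h"
    consider "g = a" "h \<in> S" | "h = a" "g \<in> S" | "g \<in> S" "h \<in> S" "g \<noteq> a" "h \<noteq> a"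
      using g h \<open>g \<noteq> h\<close> by blast
    then show "g - h \<notin> K"
    proof cases
      case 1
      then have "h \<notin> nbrs"
        using same i(2) insert.hyps(2) by (metis fun_upd_other fun_upd_same image_eqI)
      then show ?thesis
        using 1 unfolding nbrs_def by simp
    next
      case 2
      then have "g \<notin> nbrs"
        using same i(2) insert.hyps(2) by (metis fun_upd_other fun_upd_same image_eqI)
      then show ?thesis
        using 2 unfolding nbrs_def by simp
    next
      case 3
      then show ?thesis
        using same col_sep \<open>g \<noteq> h\<close> by auto
    qed
  qed
qed

lemma abs_sum_le_by_classes:
  fixes y :: "'a \<Rightarrow> real" and col :: "'a \<Rightarrow> nat"
  assumes S: "finite S" and col: "col ` S \<subseteq> {..<D}"
    and class_bound: "\<And>k. k < D \<Longrightarrow>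
      \<bar>\<Sum>g\<in>{g\<in>S. col g = k}. y g\<bar> \<le> real (card {g\<in>S. col g = k}) * \<epsilon> + \<delta>"
  shows "\<bar>\<Sum>g\<in>S. y g\<bar> \<le> real (card S) * \<epsilon> + real D * \<delta>"
proof -
  have "(\<Sum>g\<in>S. y g) = (\<Sum>k<D. \<Sum>g\<in>{g\<in>S. col g = k}. y g)"
    by (rule sum.group[OF S _ col, symmetric]) simp
  moreover have "real (card S) = (\<Sum>k<D. real (card {g\<in>S. col g = k}))"
    using sum.group[OF S _ col, of "\<lambda>_. 1::real"] by simp
  moreover have "(\<Sum>k<D. \<bar>\<Sum>g\<in>{g\<in>S. col g = k}. y g\<bar>)
      \<le> (\<Sum>k<D. real (card {g\<in>S. col g = k}) * \<epsilon> + \<delta>)"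
    by (intro sum_mono class_bound) simp
  ultimately show ?thesis
    by (simp add: sum.distrib sum_distrib_right order_trans[OF sum_abs])
qed

lemma measure_class_deviation_le:
  fixes T :: "'g::group_add \<Rightarrow> 'x \<Rightarrow> 'x" and f :: "'x \<Rightarrow> real" and col :: "'g \<Rightarrow> nat"
  assumes "prob_space M" and T: "mp_action M T" and f[measurable]: "f \<in> borel_measurable M"
    and f_bound: "\<And>x. x \<in> space M \<Longrightarrow> \<bar>f x - (\<integral>x. f x \<partial>M)\<bar> \<le> c"
    and indep: "eps_independent M f (gen_sigma M {(\<lambda>x. f (T g x)) | g. g \<notin> K}) \<epsilon>"
    and S: "finite S"
    and col_sep: "\<And>g h. g \<in> S \<Longrightarrow> h \<in> S \<Longrightarrow> g \<noteq> h \<Longrightarrow> col g = col h \<Longrightarrow> g - h \<notin> K"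
    and \<delta>: "0 < \<delta>" "\<delta> \<le> 2 * c"
  shows "measure M (\<Union>k<D. {x \<in> space M. real (card {g \<in> S. col g = k}) * \<epsilon> + \<delta> * real (card S)
             \<le> \<bar>\<Sum>g\<in>{g \<in> S. col g = k}. f (T g x) - (\<integral>x. f x \<partial>M)\<bar>})
           \<le> 2 * real D * exp (- (\<delta>\<^sup>2 / (4 * c\<^sup>2))) ^ card S"
proof -
  interpret prob_space M by fact
  note [measurable] = mp_action_measurable[OF T]
  define t where "t = \<delta> / (2 * c\<^sup>2)"
  have t: "0 < t" "t * c \<le> 1"
    unfolding t_def using \<delta> by (auto simp: field_simps power2_eq_square)
  have exponent: "real (card S) * t\<^sup>2 * c\<^sup>2 - t * (\<delta> * real (card S))
      = real (card S) * (- (\<delta>\<^sup>2 / (4 * c\<^sup>2)))"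
    unfolding t_def using \<delta> by (simp add: field_simps power2_eq_square)
  define bad where "bad k = {x \<in> space M. real (card {g \<in> S. col g = k}) * \<epsilon> + \<delta> * real (card S)
    \<le> \<bar>\<Sum>g\<in>{g \<in> S. col g = k}. f (T g x) - (\<integral>x. f x \<partial>M)\<bar>}" for k
  have bad_le: "measure M (bad k) \<le> 2 * exp (- (\<delta>\<^sup>2 / (4 * c\<^sup>2))) ^ card S" for k
  proof -
    have "card {g \<in> S. col g = k} \<le> card S"
      using S by (intro card_mono) auto
    then have "exp (real (card {g \<in> S. col g = k}) * t\<^sup>2 * c\<^sup>2 - t * (\<delta> * real (card S)))
        \<le> exp (- (\<delta>\<^sup>2 / (4 * c\<^sup>2))) ^ card S"
      unfolding exp_of_nat_mult[symmetric] exponent[symmetric] by (simp add: mult_right_mono)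
    moreover have "measure M (bad k)
        \<le> 2 * exp (real (card {g \<in> S. col g = k}) * t\<^sup>2 * c\<^sup>2 - t * (\<delta> * real (card S)))"
      unfolding bad_def using S col_sep
      by (intro measure_separated_sum_deviation_le[OF assms(1) T f f_bound indep _ _ t]) auto
    ultimately show ?thesis
      by linarith
  qed
  have "measure M (\<Union>k<D. bad k) \<le> (\<Sum>k<D. measure M (bad k))"
    unfolding bad_def by (intro measure_UNION_le) auto
  also have "\<dots> \<le> (\<Sum>k<D. 2 * exp (- (\<delta>\<^sup>2 / (4 * c\<^sup>2))) ^ card S)"
    by (intro sum_mono bad_le)
  finally show ?thesis
    unfolding bad_def by (simp add: mult_ac)
qed

lemma AE_eventually_abs_sum_deviation_le_bounded:
  fixes T :: "'g::group_add \<Rightarrow> 'x \<Rightarrow> 'x" and F :: "nat \<Rightarrow> 'g set" and f :: "'x \<Rightarrow> real"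
  assumes "prob_space M" and T: "mp_action M T" and F: "\<And>n. finite (F n)"
    and summable: "\<And>\<alpha>::real. 0 \<le> \<alpha> \<Longrightarrow> \<alpha> < 1 \<Longrightarrow> summable (\<lambda>n. \<alpha> ^ card (F n))"
    and f[measurable]: "f \<in> borel_measurable M" and f_bound: "\<And>x. x \<in> space M \<Longrightarrow> \<bar>f x\<bar> \<le> C"
    and K: "finite K" and indep: "eps_independent M f (gen_sigma M {(\<lambda>x. f (T g x)) | g. g \<notin> K}) \<epsilon>"
    and \<epsilon>: "0 < \<epsilon>" "\<epsilon> \<le> 1"
  shows "AE x in M. eventually
           (\<lambda>n. \<bar>\<Sum>g\<in>F n. f (T g x) - (\<integral>x. f x \<partial>M)\<bar> \<le> 2 * \<epsilon> * real (card (F n))) sequentially"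
proof -
  interpret prob_space M by fact
  note [measurable] = mp_action_measurable[OF T]
  define \<mu> where "\<mu> = (\<integral>x. f x \<partial>M)"
  define c where "c = max 1 (C + \<bar>\<mu>\<bar>)"
  define D where "D = 2 * card K + 1"
  define \<delta> where "\<delta> = \<epsilon> / real D"
  have "\<bar>f x - \<mu>\<bar> \<le> C + \<bar>\<mu>\<bar>" if "x \<in> space M" for x
    using abs_triangle_ineq4[of "f x" \<mu>] f_bound[OF that] by linarith
  then have c: "1 \<le> c" "\<And>x. x \<in> space M \<Longrightarrow> \<bar>f x - \<mu>\<bar> \<le> c"
    unfolding c_def by force+
  have \<delta>: "0 < \<delta>" "\<delta> \<le> 1" "real D * \<delta> = \<epsilon>"
    unfolding \<delta>_def D_def using \<epsilon> by (auto simp: field_simps)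
  with c(1) have "\<delta> \<le> 2 * c"
    by linarith
  obtain col where col_range: "\<And>n g. g \<in> F n \<Longrightarrow> col n g < D"
    and col_sep: "\<And>n g h. g \<in> F n \<Longrightarrow> h \<in> F n \<Longrightarrow> g \<noteq> h \<Longrightarrow> col n g = col n h \<Longrightarrow> g - h \<notin> K"
    using colouring_avoiding_differences[OF F K] unfolding D_def by metis
  define bad where "bad n = (\<Union>k<D. {x \<in> space M. real (card {g \<in> F n. col n g = k}) * \<epsilon>
    + \<delta> * real (card (F n)) \<le> \<bar>\<Sum>g\<in>{g \<in> F n. col n g = k}. f (T g x) - \<mu>\<bar>})" for n
  have bad_sets[measurable]: "bad n \<in> sets M" for n
    unfolding bad_def by measurable
  have bad_le: "measure M (bad n) \<le> 2 * real D * exp (- (\<delta>\<^sup>2 / (4 * c\<^sup>2))) ^ card (F n)" for n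
    unfolding bad_def \<mu>_def
    by (rule measure_class_deviation_le[OF assms(1) T f c(2)[unfolded \<mu>_def] indep F col_sep \<delta>(1) \<open>\<delta> \<le> 2 * c\<close>])
  have "summable (\<lambda>n. 2 * real D * exp (- (\<delta>\<^sup>2 / (4 * c\<^sup>2))) ^ card (F n))"
    using summable[of "exp (- (\<delta>\<^sup>2 / (4 * c\<^sup>2)))"] \<delta>(1) c(1) by (intro summable_mult) auto
  then have "summable (\<lambda>n. measure M (bad n))"
    by (rule summable_comparison_test'[where N=0]) (use bad_le in auto)
  then have "AE x in M. eventually (\<lambda>n. x \<in> space M - bad n) sequentially"
    by (intro borel_cantelli_AE1) (auto simp: emeasure_eq_measure)
  then show ?thesis
    unfolding \<mu>_def[symmetric]
  proof (rule AE_mp, intro AE_I2 impI)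
    fix x
    assume x: "x \<in> space M" and "eventually (\<lambda>n. x \<in> space M - bad n) sequentially"
    from this(2) show "eventually (\<lambda>n. \<bar>\<Sum>g\<in>F n. f (T g x) - \<mu>\<bar> \<le> 2 * \<epsilon> * real (card (F n))) sequentially"
    proof (rule eventually_mono)
      fix n
      assume "x \<in> space M - bad n"
      then have "\<bar>\<Sum>g\<in>F n. f (T g x) - \<mu>\<bar> \<le> real (card (F n)) * \<epsilon> + real D * (\<delta> * real (card (F n)))"
        using col_range x unfolding bad_def
        by (intro abs_sum_le_by_classes[OF F]) (auto simp: not_le less_imp_le)
      also have "real (card (F n)) * \<epsilon> + real D * (\<delta> * real (card (F n))) = 2 * \<epsilon> * real (card (F n))"
        unfolding mult.assoc[symmetric] \<delta>(3) by simp
      finally show "\<bar>\<Sum>g\<in>F n. f (T g x) - \<mu>\<bar> \<le> 2 * \<epsilon> * real (card (F n))" .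
    qed
  qed
qed

lemma gen_sigma_comp_subset:
  fixes \<phi> :: "real \<Rightarrow> real"
  assumes "\<phi> \<in> borel_measurable borel"
  shows "gen_sigma M {(\<lambda>x. \<phi> (h i x)) | i. P i} \<subseteq> gen_sigma M {h i | i. P i}"
  unfolding gen_sigma_def
proof (rule sigma_sets_mono, intro subsetI)
  fix A
  assume "A \<in> {g -` B \<inter> space M | g B. g \<in> {(\<lambda>x. \<phi> (h i x)) | i. P i} \<and> B \<in> sets borel}"
  then obtain i B where "P i" "B \<in> sets borel" "A = h i -` (\<phi> -` B) \<inter> space M"
    by auto
  moreover have "\<phi> -` B \<in> sets borel"
    using measurable_sets[OF assms \<open>B \<in> sets borel\<close>] by simp
  ultimately show "A \<in> sigma_sets (space M) {g -` B \<inter> space M | g B. g \<in> {h i | i. P i} \<and> B \<in> sets borel}"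
    by (blast intro: sigma_sets.Basic)
qed

lemma eps_independent_cong_AE:
  fixes f f' :: "'x \<Rightarrow> real"
  assumes indep: "eps_independent M f \<Sigma> \<epsilon>" and "\<Sigma>' \<subseteq> \<Sigma>" "\<Sigma> \<subseteq> sets M"
    and [measurable]: "f \<in> borel_measurable M" "f' \<in> borel_measurable M"
    and eq: "AE x in M. f' x = f x"
  shows "eps_independent M f' \<Sigma>' \<epsilon>"
  unfolding eps_independent_def
proof (intro ballI impI)
  fix B
  assume "B \<in> \<Sigma>'" "measure M B > 0"
  then have B: "B \<in> \<Sigma>" "B \<in> sets M"
    using assms(2,3) by auto
  have "(\<integral>x. indicator B x * f' x \<partial>M) = (\<integral>x. indicator B x * f x \<partial>M)"
    using eq B(2) by (intro integral_cong_AE) auto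
  moreover have "(\<integral>x. f' x \<partial>M) = (\<integral>x. f x \<partial>M)"
    using eq by (intro integral_cong_AE) auto
  ultimately show "\<bar>(\<integral>x. indicator B x * f' x \<partial>M) / measure M B - (\<integral>x. f' x \<partial>M)\<bar> < \<epsilon>"
    using indep B(1) \<open>measure M B > 0\<close> unfolding eps_independent_def by simp
qed

lemma AE_all_translates:
  fixes T :: "'g::{group_add, countable} \<Rightarrow> 'x \<Rightarrow> 'x"
  assumes T: "mp_action M T" and P: "{x \<in> space M. P x} \<in> sets M" and "AE x in M. P x"
  shows "AE x in M. \<forall>g. P (T g x)"
  unfolding AE_all_countable
proof
  fix g
  have "AE x in distr M M (T g). P x"
    unfolding mp_action_distr[OF T] by fact
  then show "AE x in M. P (T g x)"
    using AE_distr_iff[OF mp_action_measurable[OF T] P] by simp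
qed

lemma AE_eventually_abs_sum_deviation_le:
  fixes T :: "'g::{group_add, countable} \<Rightarrow> 'x \<Rightarrow> 'x" and F :: "nat \<Rightarrow> 'g set" and f :: "'x \<Rightarrow> real"
  assumes "prob_space M" and T: "mp_action M T" and F: "\<And>n. finite (F n)"
    and summable: "\<And>\<alpha>::real. 0 \<le> \<alpha> \<Longrightarrow> \<alpha> < 1 \<Longrightarrow> summable (\<lambda>n. \<alpha> ^ card (F n))"
    and f[measurable]: "f \<in> borel_measurable M" and f_bound: "AE x in M. \<bar>f x\<bar> \<le> C"
    and K: "finite K" and indep: "eps_independent M f (gen_sigma M {(\<lambda>x. f (T g x)) | g. g \<notin> K}) \<epsilon>"
    and \<epsilon>: "0 < \<epsilon>" "\<epsilon> \<le> 1"
  shows "AE x in M. eventually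
           (\<lambda>n. \<bar>\<Sum>g\<in>F n. f (T g x) - (\<integral>x. f x \<partial>M)\<bar> \<le> 2 * \<epsilon> * real (card (F n))) sequentially"
proof -
  interpret prob_space M by fact
  note [measurable] = mp_action_measurable[OF T]
  define \<phi> where "\<phi> v = max (- C) (min C v)" for v
  define f' where "f' x = \<phi> (f x)" for x
  have \<phi>[measurable]: "\<phi> \<in> borel_measurable borel"
    unfolding \<phi>_def by measurable
  have f'[measurable]: "f' \<in> borel_measurable M"
    unfolding f'_def by measurable
  have f'_f: "AE x in M. f' x = f x"
    using f_bound by eventually_elim (auto simp: f'_def \<phi>_def)
  have f'_T: "AE x in M. \<forall>g. f' (T g x) = f (T g x)"
    by (rule AE_all_translates[OF T _ f'_f]) measurable
  have integral_f': "(\<integral>x. f' x \<partial>M) = (\<integral>x. f x \<partial>M)"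
    using f'_f by (intro integral_cong_AE) auto
  have indep': "eps_independent M f' (gen_sigma M {(\<lambda>x. f' (T g x)) | g. g \<notin> K}) \<epsilon>"
  proof (rule eps_independent_cong_AE[OF indep _ _ f f' f'_f])
    show "gen_sigma M {(\<lambda>x. f' (T g x)) | g. g \<notin> K} \<subseteq> gen_sigma M {(\<lambda>x. f (T g x)) | g. g \<notin> K}"
      unfolding f'_def using gen_sigma_comp_subset[OF \<phi>, of M "\<lambda>g x. f (T g x)"] by simp
    show "gen_sigma M {(\<lambda>x. f (T g x)) | g. g \<notin> K} \<subseteq> sets M"
      by (rule gen_sigma_subset_sets) auto
  qed
  have "\<bar>f' x\<bar> \<le> \<bar>C\<bar>" for x
    unfolding f'_def \<phi>_def by auto
  then have "AE x in M. eventually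
      (\<lambda>n. \<bar>\<Sum>g\<in>F n. f' (T g x) - (\<integral>x. f x \<partial>M)\<bar> \<le> 2 * \<epsilon> * real (card (F n))) sequentially"
    using AE_eventually_abs_sum_deviation_le_bounded[OF prob_space_axioms T F summable f' _ K indep' \<epsilon>]
    unfolding integral_f' by blast
  with f'_T show ?thesis
    by eventually_elim simp
qed

lemma average_LIMSEQ_if_eventually_deviation_le:
  fixes y :: "'g \<Rightarrow> real" and F :: "nat \<Rightarrow> 'g set"
  assumes F: "\<And>n. finite (F n)" "\<And>n. F n \<noteq> {}"
    and dev: "\<And>k. eventually (\<lambda>n. \<bar>\<Sum>g\<in>F n. y g - L\<bar> \<le> c * (1 / real (Suc k)) * real (card (F n))) sequentially"
  shows "(\<lambda>n. (\<Sum>g\<in>F n. y g) / real (card (F n))) \<longlonglongrightarrow> L"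
  unfolding lim_sequentially
proof (intro allI impI)
  fix e :: real
  assume "0 < e"
  obtain k where "\<bar>c\<bar> / e < real (Suc k)"
    using reals_Archimedean2 less_Suc_eq of_nat_less_iff order_less_trans by metis
  then have "c * (1 / real (Suc k)) < e"
    using \<open>0 < e\<close> by (simp add: field_simps)
  have "dist ((\<Sum>g\<in>F n. y g) / real (card (F n))) L < e"
    if "\<bar>\<Sum>g\<in>F n. y g - L\<bar> \<le> c * (1 / real (Suc k)) * real (card (F n))" for n
  proof -
    have card: "0 < real (card (F n))"
      using F by (simp add: card_gt_0_iff)
    have "dist ((\<Sum>g\<in>F n. y g) / real (card (F n))) L = \<bar>\<Sum>g\<in>F n. y g - L\<bar> / real (card (F n))"
      using card by (simp add: dist_real_def sum_subtractf field_simps)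
    also have "\<dots> \<le> c * (1 / real (Suc k))"
      using that card by (simp add: divide_le_eq)
    finally show ?thesis
      using \<open>c * (1 / real (Suc k)) < e\<close> by linarith
  qed
  then show "\<exists>N. \<forall>n\<ge>N. dist ((\<Sum>g\<in>F n. y g) / real (card (F n))) L < e"
    using dev[of k] unfolding eventually_sequentially by blast
qed

theorem theorem3:
  fixes M :: "'x measure" and T :: "'g::{group_add, countable} \<Rightarrow> 'x \<Rightarrow> 'x"
    and F :: "nat \<Rightarrow> 'g set" and f :: "'x \<Rightarrow> real"
  assumes "prob_space M"
    and "mp_action M T"
    and "folner F"
    and "\<And>\<alpha>::real. 0 \<le> \<alpha> \<Longrightarrow> \<alpha> < 1 \<Longrightarrow> summable (\<lambda>n. \<alpha> ^ card (F n))"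
    and "f \<in> borel_measurable M"
    and "\<exists>C. AE x in M. \<bar>f x\<bar> \<le> C"
    and "\<And>\<epsilon>. \<epsilon> > 0 \<Longrightarrow> \<exists>K. finite K \<and>
            eps_independent M f (gen_sigma M {(\<lambda>x. f (T g x)) | g. g \<notin> K}) \<epsilon>"
  shows "AE x in M. (\<lambda>n. (\<Sum>g\<in>F n. f (T g x)) / real (card (F n))) \<longlonglongrightarrow> (\<integral>x. f x \<partial>M)"
proof -
  have F: "finite (F n)" "F n \<noteq> {}" for n
    using assms(3) unfolding folner_def by auto
  obtain C where C: "AE x in M. \<bar>f x\<bar> \<le> C"
    using assms(6) by blast
  have "AE x in M. \<forall>k::nat. eventually (\<lambda>n. \<bar>\<Sum>g\<in>F n. f (T g x) - (\<integral>x. f x \<partial>M)\<bar>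
      \<le> 2 * (1 / real (Suc k)) * real (card (F n))) sequentially"
    unfolding AE_all_countable
  proof
    fix k :: nat
    obtain K where "finite K"
      and "eps_independent M f (gen_sigma M {(\<lambda>x. f (T g x)) | g. g \<notin> K}) (1 / real (Suc k))"
      using assms(7)[of "1 / real (Suc k)"] by auto
    then show "AE x in M. eventually (\<lambda>n. \<bar>\<Sum>g\<in>F n. f (T g x) - (\<integral>x. f x \<partial>M)\<bar>
      \<le> 2 * (1 / real (Suc k)) * real (card (F n))) sequentially"
      by (intro AE_eventually_abs_sum_deviation_le[OF assms(1,2) F(1) assms(4,5) C]) auto
  qed
  then show ?thesis
    by eventually_elim (rule average_LIMSEQ_if_eventually_deviation_le[OF F], blast)
qed

end
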